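(* Let $M$ and $N$ be compact metric spaces, $f\colon M\to M$ and $g\colon N\to N$ homeomorphisms, and $q\colon M\to N$ a continuous, surjective, open map with $q\circ f=g\circ q$. If $f$ has the L-shadowing property, then $g$ has the L-shadowing property.
   Context: A homeomorphism $f$ of a compact metric space $(X,d)$ has the L-shadowing property if for every $\varepsilon>0$ there is $\delta>0$ such that every sequence $(x_k)_{k\in\mathbb{Z}}$ with $d(f(x_k),x_{k+1})\le\delta$ for all $k$ and $d(f(x_k),x_{k+1})\to0$ as $|k|\to\infty$ admits $z$ with $d(f^k(z),x_k)\le\varepsilon$ for all $k$ and $d(f^k(z),x_k)\to0$ as $|k|\to\infty$. *)

theory Defs
  imports "HOL-Analysis.Analysis"
begin

definition is_homeo_of :: "'a::metric_space set \<Rightarrow> ('a \<Rightarrow> 'a) \<Rightarrow> bool" where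
  "is_homeo_of X f \<longleftrightarrow> (\<exists>g. homeomorphism X X f g)"

definition zpow :: "'a set \<Rightarrow> ('a \<Rightarrow> 'a) \<Rightarrow> int \<Rightarrow> 'a \<Rightarrow> 'a" where
  "zpow X f k = (if 0 \<le> k then f ^^ nat k else inv_into X f ^^ nat (- k))"

definition L_shadowing :: "'a::metric_space set \<Rightarrow> ('a \<Rightarrow> 'a) \<Rightarrow> bool" where
  "L_shadowing X f \<longleftrightarrow>
    (\<forall>\<epsilon>>0. \<exists>\<delta>>0. \<forall>x :: int \<Rightarrow> 'a.
       (\<forall>k. x k \<in> X) \<and>
       (\<forall>k. dist (f (x k)) (x (k + 1)) \<le> \<delta>) \<and>
       ((\<lambda>k. dist (f (x k)) (x (k + 1))) \<longlongrightarrow> 0) at_top \<and>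
       ((\<lambda>k. dist (f (x k)) (x (k + 1))) \<longlongrightarrow> 0) at_bot
       \<longrightarrow> (\<exists>z\<in>X. (\<forall>k. dist (zpow X f k z) (x k) \<le> \<epsilon>) \<and>
              ((\<lambda>k. dist (zpow X f k z) (x k)) \<longlongrightarrow> 0) at_top \<and>
              ((\<lambda>k. dist (zpow X f k z) (x k)) \<longlongrightarrow> 0) at_bot))"

end

(*
  An open continuous surjection q on a compact space is uniformly open: points within \<rho>(\<eta>) of q a
  have preimages within \<eta> of a.  Hence a limit pseudo-orbit y of g can be lifted greedily, always
  choosing the nearest preimage, to a limit pseudo-orbit x of f with q \<circ> x = y whose jumps are
  controlled by those of y.  If z limit-shadows x, then q z limit-shadows y, because q is uniformly
  continuous and q \<circ> f^k = g^k \<circ> q.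
*)

theory Submission
  imports Defs
begin

definition L_pseudo_orbit :: "'a::metric_space set \<Rightarrow> ('a \<Rightarrow> 'a) \<Rightarrow> real \<Rightarrow> (int \<Rightarrow> 'a) \<Rightarrow> bool" where
  "L_pseudo_orbit X f \<delta> x \<longleftrightarrow>
    (\<forall>k. x k \<in> X) \<and> (\<forall>k. dist (f (x k)) (x (k + 1)) \<le> \<delta>) \<and>
    ((\<lambda>k. dist (f (x k)) (x (k + 1))) \<longlongrightarrow> 0) at_top \<and>
    ((\<lambda>k. dist (f (x k)) (x (k + 1))) \<longlongrightarrow> 0) at_bot"

definition L_shadows :: "'a::metric_space set \<Rightarrow> ('a \<Rightarrow> 'a) \<Rightarrow> real \<Rightarrow> 'a \<Rightarrow> (int \<Rightarrow> 'a) \<Rightarrow> bool" where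
  "L_shadows X f \<epsilon> z x \<longleftrightarrow>
    (\<forall>k. dist (zpow X f k z) (x k) \<le> \<epsilon>) \<and>
    ((\<lambda>k. dist (zpow X f k z) (x k)) \<longlongrightarrow> 0) at_top \<and>
    ((\<lambda>k. dist (zpow X f k z) (x k)) \<longlongrightarrow> 0) at_bot"

lemma L_shadowing_iff:
  "L_shadowing X f \<longleftrightarrow>
    (\<forall>\<epsilon>>0. \<exists>\<delta>>0. \<forall>x. L_pseudo_orbit X f \<delta> x \<longrightarrow> (\<exists>z\<in>X. L_shadows X f \<epsilon> z x))"
  unfolding L_shadowing_def L_pseudo_orbit_def L_shadows_def by blast

lemma is_homeo_of_bij_betw:
  assumes "is_homeo_of X f"
  shows "bij_betw f X X"
proof -
  obtain h where h: "homeomorphism X X f h" using assms unfolding is_homeo_of_def by blast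
  have "inj_on f X" using homeomorphism_apply1[OF h] by (rule inj_on_inverseI)
  then show ?thesis using homeomorphism_image1[OF h] by (simp add: bij_betw_def)
qed

lemma tendsto_zero_if_controlled:
  fixes D E :: "'i \<Rightarrow> real"
  assumes "(D \<longlongrightarrow> 0) F"
    and control: "\<And>\<eta>. \<eta> > 0 \<Longrightarrow> \<exists>\<rho>>0. \<forall>k. D k < \<rho> \<longrightarrow> E k < \<eta>"
    and "\<And>k. 0 \<le> E k"
  shows "(E \<longlongrightarrow> 0) F"
  unfolding tendsto_iff
proof (intro allI impI)
  fix \<eta> :: real assume "\<eta> > 0"
  then obtain \<rho> where "\<rho> > 0" and \<rho>: "\<And>k. D k < \<rho> \<Longrightarrow> E k < \<eta>" using control by blast
  have "eventually (\<lambda>k. dist (D k) 0 < \<rho>) F" using assms(1) \<open>\<rho> > 0\<close> by (rule tendstoD)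
  then show "eventually (\<lambda>k. dist (E k) 0 < \<eta>) F"
    by (rule eventually_mono) (use \<rho> assms(3) in auto)
qed

lemma funpow_semiconj_on:
  assumes "\<And>x. x \<in> M \<Longrightarrow> F x \<in> M \<and> G (q x) = q (F x)" and "z \<in> M"
  shows "(F ^^ n) z \<in> M \<and> (G ^^ n) (q z) = q ((F ^^ n) z)"
  using assms by (induction n) auto

definition nearest_preimage :: "'a::metric_space set \<Rightarrow> ('a \<Rightarrow> 'b) \<Rightarrow> 'a \<Rightarrow> 'b \<Rightarrow> 'a" where
  "nearest_preimage M q a y = (SOME u. u \<in> M \<and> q u = y \<and> (\<forall>v\<in>M. q v = y \<longrightarrow> dist a u \<le> dist a v))"

lemma nearest_preimage:
  fixes q :: "'a::metric_space \<Rightarrow> 'b::metric_space"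
  assumes "compact M" and "continuous_on M q" and "y \<in> q ` M"
  shows "nearest_preimage M q a y \<in> M" and "q (nearest_preimage M q a y) = y"
    and "\<And>v. v \<in> M \<Longrightarrow> q v = y \<Longrightarrow> dist a (nearest_preimage M q a y) \<le> dist a v"
proof -
  let ?F = "{x \<in> M. q x = y}"
  have "compact ?F"
    using closedin_compact[OF assms(1) continuous_closedin_preimage_constant[OF assms(2)]] .
  moreover have "?F \<noteq> {}" using assms(3) by auto
  moreover have "continuous_on ?F (dist a)" by (intro continuous_intros)
  ultimately have "\<exists>u\<in>?F. \<forall>v\<in>?F. dist a u \<le> dist a v" by (rule continuous_attains_inf)
  then have "\<exists>u. u \<in> M \<and> q u = y \<and> (\<forall>v\<in>M. q v = y \<longrightarrow> dist a u \<le> dist a v)" by blast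
  from someI_ex[OF this] show "nearest_preimage M q a y \<in> M" "q (nearest_preimage M q a y) = y"
    "\<And>v. v \<in> M \<Longrightarrow> q v = y \<Longrightarrow> dist a (nearest_preimage M q a y) \<le> dist a v"
    unfolding nearest_preimage_def by auto
qed

lemma open_map_uniformly_open:
  fixes q :: "'a::metric_space \<Rightarrow> 'b::metric_space"
  assumes "compact M" and "continuous_on M q" and "q ` M = N"
    and open_q: "\<And>U. openin (top_of_set M) U \<Longrightarrow> openin (top_of_set N) (q ` U)"
    and "\<eta> > 0"
  obtains \<rho> where "\<rho> > 0"
    and "\<And>a y. a \<in> M \<Longrightarrow> y \<in> N \<Longrightarrow> dist (q a) y < \<rho> \<Longrightarrow> \<exists>u\<in>M. q u = y \<and> dist a u < \<eta>"
proof -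
  have "\<forall>a\<in>M. \<exists>r>0. \<forall>y\<in>N. dist y (q a) < r \<longrightarrow> y \<in> q ` (M \<inter> ball a (\<eta>/2))"
  proof
    fix a assume "a \<in> M"
    have "openin (top_of_set N) (q ` (M \<inter> ball a (\<eta>/2)))"
      by (rule open_q) (simp add: openin_open_Int)
    moreover have "q a \<in> q ` (M \<inter> ball a (\<eta>/2))" using \<open>a \<in> M\<close> \<open>\<eta> > 0\<close> by auto
    ultimately show "\<exists>r>0. \<forall>y\<in>N. dist y (q a) < r \<longrightarrow> y \<in> q ` (M \<inter> ball a (\<eta>/2))"
      unfolding openin_euclidean_subtopology_iff by blast
  qed
  then obtain R where R: "\<forall>a\<in>M. R a > 0 \<and>
      (\<forall>y\<in>N. dist y (q a) < R a \<longrightarrow> y \<in> q ` (M \<inter> ball a (\<eta>/2)))"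
    by metis
  then have "\<forall>a\<in>M. \<exists>s>0. \<forall>x\<in>M. dist x a < s \<longrightarrow> dist (q x) (q a) < R a / 2"
    using assms(2) unfolding continuous_on_iff by (meson half_gt_zero)
  then obtain S where S: "\<forall>a\<in>M. S a > 0 \<and> (\<forall>x\<in>M. dist x a < S a \<longrightarrow> dist (q x) (q a) < R a / 2)"
    by metis
  have "M \<subseteq> (\<Union>a\<in>M. ball a (min (S a) (\<eta>/2)))"
    using S \<open>\<eta> > 0\<close> by force
  then obtain T where "T \<subseteq> M" "finite T" and T: "M \<subseteq> (\<Union>a\<in>T. ball a (min (S a) (\<eta>/2)))"
    using compactE_image[OF assms(1), of M "\<lambda>a. ball a (min (S a) (\<eta>/2))"] by blast
  define \<rho> where "\<rho> = Min (insert 1 ((\<lambda>a. R a / 2) ` T))"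
  have fin: "finite (insert 1 ((\<lambda>a. R a / 2) ` T))" using \<open>finite T\<close> by simp
  show thesis
  proof
    show "\<rho> > 0" unfolding \<rho>_def using fin R \<open>T \<subseteq> M\<close> by (subst Min_gr_iff) auto
  next
    fix a y assume a: "a \<in> M" and y: "y \<in> N" and "dist (q a) y < \<rho>"
    obtain t where t: "t \<in> T" and "a \<in> ball t (min (S t) (\<eta>/2))" using T a by blast
    then have at: "dist t a < min (S t) (\<eta>/2)" by simp
    have "t \<in> M" using t \<open>T \<subseteq> M\<close> by blast
    have "\<rho> \<le> R t / 2" unfolding \<rho>_def using fin t by (intro Min_le) auto
    moreover have "dist (q a) (q t) < R t / 2"
    proof -
      have "dist a t < S t" using at by (simp add: dist_commute)
      with S \<open>t \<in> M\<close> a show ?thesis by blast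
    qed
    ultimately have "dist y (q t) < R t"
      using \<open>dist (q a) y < \<rho>\<close> dist_triangle[of y "q t" "q a"] by (simp add: dist_commute)
    then have "y \<in> q ` (M \<inter> ball t (\<eta>/2))" using R \<open>t \<in> M\<close> y by blast
    then obtain u where "u \<in> M" "dist t u < \<eta>/2" "q u = y" by auto
    moreover have "dist a u < \<eta>" using calculation at dist_triangle[of a u t] by (simp add: dist_commute)
    ultimately show "\<exists>u\<in>M. q u = y \<and> dist a u < \<eta>" by blast
  qed
qed

lemma nearest_preimage_close:
  fixes q :: "'a::metric_space \<Rightarrow> 'b::metric_space"
  assumes "compact M" and "continuous_on M q" and "q ` M = N"
    and "\<And>U. openin (top_of_set M) U \<Longrightarrow> openin (top_of_set N) (q ` U)"
    and "\<eta> > 0"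
  obtains \<rho> where "\<rho> > 0"
    and "\<And>a y. a \<in> M \<Longrightarrow> y \<in> N \<Longrightarrow> dist (q a) y < \<rho> \<Longrightarrow> dist a (nearest_preimage M q a y) < \<eta>"
proof -
  obtain \<rho> where "\<rho> > 0"
    and \<rho>: "\<And>a y. a \<in> M \<Longrightarrow> y \<in> N \<Longrightarrow> dist (q a) y < \<rho> \<Longrightarrow> \<exists>u\<in>M. q u = y \<and> dist a u < \<eta>"
    using open_map_uniformly_open[OF assms] by blast
  show thesis
  proof (rule that[OF \<open>\<rho> > 0\<close>])
    fix a y assume "a \<in> M" "y \<in> N" "dist (q a) y < \<rho>"
    then obtain u where "u \<in> M" "q u = y" "dist a u < \<eta>" using \<rho> by blast
    moreover have "y \<in> q ` M" using assms(3) \<open>y \<in> N\<close> by simp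
    ultimately show "dist a (nearest_preimage M q a y) < \<eta>"
      using nearest_preimage(3)[OF assms(1,2), of y u a] by linarith
  qed
qed

locale open_semiconjugacy =
  fixes M :: "'a::metric_space set" and N :: "'b::metric_space set"
    and f :: "'a \<Rightarrow> 'a" and g :: "'b \<Rightarrow> 'b" and q :: "'a \<Rightarrow> 'b"
  assumes compact_M: "compact M"
    and bij_f: "bij_betw f M M" and bij_g: "bij_betw g N N"
    and continuous_q: "continuous_on M q" and q_onto: "q ` M = N"
    and open_q: "\<And>U. openin (top_of_set M) U \<Longrightarrow> openin (top_of_set N) (q ` U)"
    and semiconj: "\<And>x. x \<in> M \<Longrightarrow> q (f x) = g (q x)"
begin

lemma f_in: "x \<in> M \<Longrightarrow> f x \<in> M"
  by (rule bij_betw_apply[OF bij_f])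

lemma g_in: "y \<in> N \<Longrightarrow> g y \<in> N"
  by (rule bij_betw_apply[OF bij_g])

lemma inv_f_in: "x \<in> M \<Longrightarrow> inv_into M f x \<in> M"
  and f_inv_f: "x \<in> M \<Longrightarrow> f (inv_into M f x) = x"
  using bij_f by (auto simp: bij_betw_def inv_into_into f_inv_into_f)

lemma q_inv_into_f:
  assumes "u \<in> M" and "y \<in> N" and "q u = g y"
  shows "q (inv_into M f u) = y"
proof -
  have "g (q (inv_into M f u)) = g y"
    using semiconj[OF inv_f_in] f_inv_f assms by metis
  moreover have "q (inv_into M f u) \<in> N" using inv_f_in[OF assms(1)] q_onto by blast
  ultimately show ?thesis using bij_g assms(2) by (auto simp: bij_betw_def inj_on_def)
qed

lemma zpow_semiconj:
  assumes "z \<in> M"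
  shows "zpow M f k z \<in> M" and "zpow N g k (q z) = q (zpow M f k z)"
proof -
  have fwd: "f x \<in> M \<and> g (q x) = q (f x)" if "x \<in> M" for x
    using that f_in semiconj by simp
  have bwd: "inv_into M f x \<in> M \<and> inv_into N g (q x) = q (inv_into M f x)" if "x \<in> M" for x
  proof -
    have "q x \<in> g ` N" using that q_onto bij_g by (auto simp: bij_betw_def)
    then have "inv_into N g (q x) \<in> N" "q x = g (inv_into N g (q x))"
      by (auto simp: inv_into_into f_inv_into_f)
    then show ?thesis using q_inv_into_f[OF that] inv_f_in[OF that] by simp
  qed
  show "zpow M f k z \<in> M" "zpow N g k (q z) = q (zpow M f k z)"
    unfolding zpow_def using funpow_semiconj_on[where F = f and G = g, OF fwd assms]
      funpow_semiconj_on[where F = "inv_into M f" and G = "inv_into N g", OF bwd assms]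
    by auto
qed

text \<open>Forwards, \<open>x (k+1)\<close> is the preimage of \<open>y (k+1)\<close> nearest to \<open>f (x k)\<close>; backwards,
  \<open>f (x k)\<close> is the preimage of \<open>g (y k)\<close> nearest to \<open>x (k+1)\<close>. In both directions the jump
  \<open>dist (f (x k)) (x (k+1))\<close> is a distance to a nearest preimage, so no continuity of the
  inverses is needed.\<close>

primrec lift_fwd :: "(int \<Rightarrow> 'b) \<Rightarrow> nat \<Rightarrow> 'a" where
  "lift_fwd y 0 = inv_into M q (y 0)"
| "lift_fwd y (Suc n) = nearest_preimage M q (f (lift_fwd y n)) (y (int n + 1))"

primrec lift_bwd :: "(int \<Rightarrow> 'b) \<Rightarrow> nat \<Rightarrow> 'a" where
  "lift_bwd y 0 = inv_into M q (y 0)"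
| "lift_bwd y (Suc n) = inv_into M f (nearest_preimage M q (lift_bwd y n) (g (y (- int n - 1))))"

definition lift :: "(int \<Rightarrow> 'b) \<Rightarrow> int \<Rightarrow> 'a" where
  "lift y k = (if 0 \<le> k then lift_fwd y (nat k) else lift_bwd y (nat (- k)))"

lemma nearest_preimage_in:
  "y \<in> N \<Longrightarrow> nearest_preimage M q a y \<in> M \<and> q (nearest_preimage M q a y) = y"
  using nearest_preimage(1,2)[OF compact_M continuous_q] q_onto by blast

lemma inv_into_q_in: "y \<in> N \<Longrightarrow> inv_into M q y \<in> M \<and> q (inv_into M q y) = y"
  using q_onto by (auto simp: inv_into_into f_inv_into_f)

lemma lift_fwd_in:
  assumes "\<And>k. y k \<in> N"
  shows "lift_fwd y n \<in> M \<and> q (lift_fwd y n) = y (int n)"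
proof (induction n)
  case 0
  show ?case using inv_into_q_in assms by simp
next
  case (Suc n)
  show ?case using nearest_preimage_in[OF assms] by (simp add: add.commute)
qed

lemma lift_bwd_in:
  assumes "\<And>k. y k \<in> N"
  shows "lift_bwd y n \<in> M \<and> q (lift_bwd y n) = y (- int n)"
proof (induction n)
  case 0
  show ?case using inv_into_q_in assms by simp
next
  case (Suc n)
  let ?u = "nearest_preimage M q (lift_bwd y n) (g (y (- int n - 1)))"
  have "g (y (- int n - 1)) \<in> N" using assms g_in by blast
  then have "?u \<in> M" "q ?u = g (y (- int n - 1))" using nearest_preimage_in by auto
  then have "q (inv_into M f ?u) = y (- int n - 1)" using q_inv_into_f assms by blast
  moreover have "- int (Suc n) = - int n - 1" by simp
  ultimately show ?case unfolding lift_bwd.simps using inv_f_in \<open>?u \<in> M\<close> by metis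
qed

lemma lift_in: "(\<And>k. y k \<in> N) \<Longrightarrow> lift y k \<in> M"
  and q_lift: "(\<And>k. y k \<in> N) \<Longrightarrow> q (lift y k) = y k"
  using lift_fwd_in[of y "nat k"] lift_bwd_in[of y "nat (- k)"] by (auto simp: lift_def)

lemma lift_step_nonneg:
  assumes "0 \<le> k"
  shows "lift y (k + 1) = nearest_preimage M q (f (lift y k)) (y (k + 1))"
proof -
  obtain n where "k = int n" using assms nonneg_eq_int by blast
  then show ?thesis by (simp add: lift_def nat_add_distrib)
qed

lemma lift_nonpos: "k \<le> 0 \<Longrightarrow> lift y k = lift_bwd y (nat (- k))"
  by (cases "k = 0") (auto simp: lift_def)

lemma lift_step_neg:
  assumes "\<And>k. y k \<in> N" and "k < 0"
  shows "f (lift y k) = nearest_preimage M q (lift y (k + 1)) (g (y k))"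
proof -
  define n where "n = nat (- k - 1)"
  have k: "k = - int n - 1" using assms(2) unfolding n_def by simp
  have "lift y k = lift_bwd y (Suc n)" using lift_nonpos[of k] k by (simp add: nat_add_distrib)
  moreover have "lift y (k + 1) = lift_bwd y n" using lift_nonpos[of "k + 1"] k by simp
  moreover have "g (y k) \<in> N" using assms(1) g_in by blast
  ultimately show ?thesis using k f_inv_f nearest_preimage_in by simp
qed

lemma lift_jump_control:
  assumes "\<eta> > 0"
  obtains \<rho> where "\<rho> > 0"
    and "\<And>y k. (\<And>k. y k \<in> N) \<Longrightarrow> dist (g (y k)) (y (k + 1)) < \<rho> \<Longrightarrow>
            dist (f (lift y k)) (lift y (k + 1)) < \<eta>"
proof -
  obtain \<rho> where "\<rho> > 0" and \<rho>: "\<And>a y. a \<in> M \<Longrightarrow> y \<in> N \<Longrightarrow> dist (q a) y < \<rho> \<Longrightarrow>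
      dist a (nearest_preimage M q a y) < \<eta>"
    using nearest_preimage_close[OF compact_M continuous_q q_onto open_q assms] by blast
  show thesis
  proof (rule that[OF \<open>\<rho> > 0\<close>])
    fix y :: "int \<Rightarrow> 'b" and k :: int
    assume yN: "\<And>k. y k \<in> N" and jump: "dist (g (y k)) (y (k + 1)) < \<rho>"
    show "dist (f (lift y k)) (lift y (k + 1)) < \<eta>"
    proof (cases "0 \<le> k")
      case True
      have "q (f (lift y k)) = g (y k)" using semiconj lift_in[OF yN] q_lift[OF yN] by simp
      then show ?thesis
        using \<rho>[of "f (lift y k)" "y (k + 1)"] jump yN lift_in[OF yN] f_in
          lift_step_nonneg[OF True]
        by simp
    next
      case False
      have "g (y k) \<in> N" using yN g_in by blast
      then show ?thesis
        using \<rho>[of "lift y (k + 1)" "g (y k)"] jump lift_in[OF yN] q_lift[OF yN]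
          lift_step_neg[OF yN] False
        by (simp add: dist_commute)
    qed
  qed
qed

lemma lift_L_pseudo_orbit:
  assumes "\<delta>' > 0"
  obtains \<delta> where "\<delta> > 0" and "\<And>y. L_pseudo_orbit N g \<delta> y \<Longrightarrow> L_pseudo_orbit M f \<delta>' (lift y)"
proof -
  obtain \<rho> where "\<rho> > 0" and \<rho>: "\<And>y k. (\<And>k. y k \<in> N) \<Longrightarrow> dist (g (y k)) (y (k + 1)) < \<rho> \<Longrightarrow>
      dist (f (lift y k)) (lift y (k + 1)) < \<delta>'"
    using lift_jump_control[OF assms] by blast
  show thesis
  proof (rule that[of "\<rho> / 2"])
    show "\<rho> / 2 > 0" using \<open>\<rho> > 0\<close> by simp
  next
    fix y assume "L_pseudo_orbit N g (\<rho> / 2) y"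
    then have yN: "\<And>k. y k \<in> N" and jump: "\<And>k. dist (g (y k)) (y (k + 1)) \<le> \<rho> / 2"
      and top: "((\<lambda>k. dist (g (y k)) (y (k + 1))) \<longlongrightarrow> 0) at_top"
      and bot: "((\<lambda>k. dist (g (y k)) (y (k + 1))) \<longlongrightarrow> 0) at_bot"
      unfolding L_pseudo_orbit_def by blast+
    have control: "\<exists>\<rho>>0. \<forall>k. dist (g (y k)) (y (k + 1)) < \<rho> \<longrightarrow>
        dist (f (lift y k)) (lift y (k + 1)) < \<eta>" if "\<eta> > 0" for \<eta>
      using lift_jump_control[OF that] yN by metis
    have "dist (f (lift y k)) (lift y (k + 1)) \<le> \<delta>'" for k
      using \<rho>[of y k, OF yN] jump[of k] \<open>\<rho> > 0\<close> by simp
    then show "L_pseudo_orbit M f \<delta>' (lift y)"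
      unfolding L_pseudo_orbit_def
      using lift_in[OF yN] tendsto_zero_if_controlled[OF top control]
        tendsto_zero_if_controlled[OF bot control] by simp
  qed
qed

lemma L_shadows_image:
  assumes "\<epsilon> > 0"
  obtains \<omega> where "\<omega> > 0"
    and "\<And>z x. z \<in> M \<Longrightarrow> (\<And>k. x k \<in> M) \<Longrightarrow> L_shadows M f \<omega> z x \<Longrightarrow>
            L_shadows N g \<epsilon> (q z) (\<lambda>k. q (x k))"
proof -
  have uniform: "\<exists>\<rho>>0. \<forall>a\<in>M. \<forall>b\<in>M. dist a b < \<rho> \<longrightarrow> dist (q a) (q b) < \<eta>" if "\<eta> > 0" for \<eta>
    using compact_uniformly_continuous[OF continuous_q compact_M] that
    unfolding uniformly_continuous_on_def by (metis dist_commute)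
  obtain \<rho> where "\<rho> > 0" and \<rho>: "\<forall>a\<in>M. \<forall>b\<in>M. dist a b < \<rho> \<longrightarrow> dist (q a) (q b) < \<epsilon>"
    using uniform[OF assms] by blast
  show thesis
  proof (rule that[of "\<rho> / 2"])
    show "\<rho> / 2 > 0" using \<open>\<rho> > 0\<close> by simp
  next
    fix z x assume "z \<in> M" and xM: "\<And>k. x k \<in> M" and "L_shadows M f (\<rho> / 2) z x"
    then have close: "\<And>k. dist (zpow M f k z) (x k) \<le> \<rho> / 2"
      and top: "((\<lambda>k. dist (zpow M f k z) (x k)) \<longlongrightarrow> 0) at_top"
      and bot: "((\<lambda>k. dist (zpow M f k z) (x k)) \<longlongrightarrow> 0) at_bot"
      unfolding L_shadows_def by blast+
    have dist_eq: "dist (zpow N g k (q z)) (q (x k)) = dist (q (zpow M f k z)) (q (x k))" for k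
      using zpow_semiconj(2)[OF \<open>z \<in> M\<close>] by simp
    have control: "\<exists>\<rho>>0. \<forall>k. dist (zpow M f k z) (x k) < \<rho> \<longrightarrow>
        dist (zpow N g k (q z)) (q (x k)) < \<eta>" if "\<eta> > 0" for \<eta>
      using uniform[OF that] zpow_semiconj(1)[OF \<open>z \<in> M\<close>] xM unfolding dist_eq by metis
    have "dist (zpow N g k (q z)) (q (x k)) \<le> \<epsilon>" for k
    proof -
      have "dist (zpow M f k z) (x k) < \<rho>" using close[of k] \<open>\<rho> > 0\<close> by linarith
      then show ?thesis using \<rho> zpow_semiconj(1)[OF \<open>z \<in> M\<close>] xM unfolding dist_eq by fastforce
    qed
    then show "L_shadows N g \<epsilon> (q z) (\<lambda>k. q (x k))"
      unfolding L_shadows_def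
      using tendsto_zero_if_controlled[OF top control] tendsto_zero_if_controlled[OF bot control]
      by simp
  qed
qed

lemma L_shadowing_factor:
  assumes "L_shadowing M f"
  shows "L_shadowing N g"
  unfolding L_shadowing_iff
proof (intro allI impI)
  fix \<epsilon> :: real assume "\<epsilon> > 0"
  obtain \<omega> where "\<omega> > 0" and descend: "\<And>z x. z \<in> M \<Longrightarrow> (\<And>k. x k \<in> M) \<Longrightarrow>
      L_shadows M f \<omega> z x \<Longrightarrow> L_shadows N g \<epsilon> (q z) (\<lambda>k. q (x k))"
    using L_shadows_image[OF \<open>\<epsilon> > 0\<close>] by blast
  obtain \<delta>' where "\<delta>' > 0" and shadow: "\<And>x. L_pseudo_orbit M f \<delta>' x \<Longrightarrow> \<exists>z\<in>M. L_shadows M f \<omega> z x"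
    using assms \<open>\<omega> > 0\<close> unfolding L_shadowing_iff by blast
  obtain \<delta> where "\<delta> > 0" and lift: "\<And>y. L_pseudo_orbit N g \<delta> y \<Longrightarrow> L_pseudo_orbit M f \<delta>' (lift y)"
    using lift_L_pseudo_orbit[OF \<open>\<delta>' > 0\<close>] by blast
  have "\<exists>z\<in>N. L_shadows N g \<epsilon> z y" if y: "L_pseudo_orbit N g \<delta> y" for y
  proof -
    have yN: "\<And>k. y k \<in> N" using y unfolding L_pseudo_orbit_def by blast
    obtain z where "z \<in> M" and "L_shadows M f \<omega> z (lift y)" using shadow[OF lift[OF y]] by blast
    then have "L_shadows N g \<epsilon> (q z) (\<lambda>k. q (lift y k))"
      using descend[of z "lift y", OF \<open>z \<in> M\<close> lift_in[OF yN]] by blast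
    then show ?thesis using \<open>z \<in> M\<close> q_onto q_lift[OF yN] by auto
  qed
  then show "\<exists>\<delta>>0. \<forall>y. L_pseudo_orbit N g \<delta> y \<longrightarrow> (\<exists>z\<in>N. L_shadows N g \<epsilon> z y)"
    using \<open>\<delta> > 0\<close> by blast
qed

end

theorem mainTheorem15:
  fixes M :: "'a::metric_space set" and N :: "'b::metric_space set"
    and f :: "'a \<Rightarrow> 'a" and g :: "'b \<Rightarrow> 'b" and q :: "'a \<Rightarrow> 'b"
  assumes "compact M" and "compact N"
    and "is_homeo_of M f" and "is_homeo_of N g"
    and "continuous_on M q" and "q ` M = N"
    and "\<And>U. openin (top_of_set M) U \<Longrightarrow> openin (top_of_set N) (q ` U)"
    and "\<And>x. x \<in> M \<Longrightarrow> q (f x) = g (q x)"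
    and "L_shadowing M f"
  shows "L_shadowing N g"
proof -
  have "bij_betw f M M" and "bij_betw g N N"
    using assms(3,4) by (simp_all add: is_homeo_of_bij_betw)
  then interpret open_semiconjugacy M N f g q
    using assms(1,5-8) by unfold_locales
  show ?thesis using L_shadowing_factor assms(9) .
qed

end
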